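(* Let $A$ be an $n\times n$ generalized tournament matrix and let $X$ be a clan of $A$. Then $\mathrm{Inv}(A,X)$ has the same principal minors as $A$, i.e. $\det \mathrm{Inv}(A,X)[Y]=\det A[Y]$ for every nonempty $Y\subseteq[n]$.
   Context: A generalized tournament matrix of order $n$ is a real $n\times n$ matrix $M=(m_{ij})$ with nonnegative entries satisfying $M+M^{t}=J_n-I_n$. Write $[n]=\{1,\ldots,n\}$; $M[Y]$ is the principal submatrix indexed by $Y$. A clan of $M$ is a subset $X\subseteq[n]$ such that for all $i,j\in X$ and $k\in[n]\setminus X$, $m_{ik}=m_{jk}$ and $m_{ki}=m_{kj}$. For $X\subseteq[n]$, $\mathrm{Inv}(M,X)$ is the matrix obtained from $M$ by replacing $m_{ij}$ by $m_{ji}$ for all $i,j\in X$. *)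

theory Defs
  imports "Jordan_Normal_Form.Determinant" "Jordan_Normal_Form.DL_Submatrix"
begin

text \<open>Indices are 0-based: [n] is rendered as {0..<n}.\<close>

definition gen_tournament :: "nat \<Rightarrow> real mat \<Rightarrow> bool" where
  "gen_tournament n M \<longleftrightarrow> M \<in> carrier_mat n n \<and>
     (\<forall>i<n. \<forall>j<n. M $$ (i,j) \<ge> 0) \<and>
     M + transpose_mat M = mat n n (\<lambda>_. 1) - 1\<^sub>m n"

definition clan :: "nat \<Rightarrow> real mat \<Rightarrow> nat set \<Rightarrow> bool" where
  "clan n M X \<longleftrightarrow> X \<subseteq> {0..<n} \<and>
     (\<forall>i\<in>X. \<forall>j\<in>X. \<forall>k\<in>{0..<n} - X.
        M $$ (i,k) = M $$ (j,k) \<and> M $$ (k,i) = M $$ (k,j))"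

definition Inv :: "real mat \<Rightarrow> nat set \<Rightarrow> real mat" where
  "Inv M X = mat (dim_row M) (dim_col M)
     (\<lambda>(i,j). if i \<in> X \<and> j \<in> X then M $$ (j,i) else M $$ (i,j))"

definition principal_submatrix :: "real mat \<Rightarrow> nat set \<Rightarrow> real mat" where
  "principal_submatrix M Y = submatrix M Y Y"

end

(*
  Expand both determinants by the Leibniz formula and classify each permutation p by its
  exits, the points of X that p sends outside X. Since the rows indexed by X agree outside X
  (for A and for Inv(A, X) alike), the terms with at least two exits cancel in pairs: swap the
  images of two exits. A permutation with no exit is s o t with s permuting X and t its complement,
  and one with exactly one exit a is s o t o (a k), where k is the unique point outside X
  with p k in X.
  Replacing s by its inverse, and a by s a in the second case, reverses every arc of p
  inside X; it preserves the sign, and transposing the X-block exactly compensates, with the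
  clan property matching the two rerouted arcs k -> a and s a -> t k.
*)
theory Submission
  imports Defs "HOL-Library.Disjoint_Sets"
begin

definition leibniz_term :: "'a set \<Rightarrow> ('a \<Rightarrow> 'a \<Rightarrow> 'b::comm_ring_1) \<Rightarrow> ('a \<Rightarrow> 'a) \<Rightarrow> 'b" where
  "leibniz_term U f p = of_int (sign p) * (\<Prod>i\<in>U. f i (p i))"

definition leibniz_det :: "'a set \<Rightarrow> ('a \<Rightarrow> 'a \<Rightarrow> 'b::comm_ring_1) \<Rightarrow> 'b" where
  "leibniz_det U f = (\<Sum>p | p permutes U. leibniz_term U f p)"

definition clan_on :: "'a set \<Rightarrow> ('a \<Rightarrow> 'a \<Rightarrow> 'b) \<Rightarrow> 'a set \<Rightarrow> bool" where
  "clan_on U f X \<longleftrightarrow> X \<subseteq> U \<and>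
     (\<forall>i\<in>X. \<forall>j\<in>X. \<forall>k\<in>U - X. f i k = f j k \<and> f k i = f k j)"

lemma clan_onD:
  assumes "clan_on U f X" and "i \<in> X" "j \<in> X" "k \<in> U - X"
  shows "f i k = f j k" and "f k i = f k j"
  using assms unfolding clan_on_def by blast+

definition transpose_on :: "'a set \<Rightarrow> ('a \<Rightarrow> 'a \<Rightarrow> 'b) \<Rightarrow> 'a \<Rightarrow> 'a \<Rightarrow> 'b" where
  "transpose_on X f i j = (if i \<in> X \<and> j \<in> X then f j i else f i j)"

definition exits :: "'a set \<Rightarrow> ('a \<Rightarrow> 'a) \<Rightarrow> 'a set" where
  "exits X p = {x \<in> X. p x \<notin> X}"

definition entries :: "'a set \<Rightarrow> ('a \<Rightarrow> 'a) \<Rightarrow> 'a set" where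
  "entries X p = {y. y \<notin> X \<and> p y \<in> X}"

definition inv_within :: "'a set \<Rightarrow> ('a \<Rightarrow> 'a) \<Rightarrow> 'a \<Rightarrow> 'a" where
  "inv_within X u x = (if x \<in> X then Hilbert_Choice.inv u x else u x)"

lemma prod_permutes_cong:
  assumes "\<sigma> permutes U" and "\<And>j. j \<in> U \<Longrightarrow> g (\<sigma> j) = h j"
  shows "prod g U = prod h U"
  using prod.permute[OF assms(1), of g] assms(2) by simp

lemma exits_nonempty_imp_entries_nonempty:
  assumes p: "surj p" and fin: "finite X" and ex: "exits X p \<noteq> {}"
  shows "entries X p \<noteq> {}"
proof
  assume no_entry: "entries X p = {}"
  have "X \<subseteq> p ` (X - exits X p)"
  proof
    fix x assume x: "x \<in> X"
    obtain y where y: "x = p y" using surjD[OF p] by blast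
    then have "y \<in> X" using no_entry x by (auto simp: entries_def)
    then show "x \<in> p ` (X - exits X p)" using x y by (auto simp: exits_def)
  qed
  then have "card X \<le> card (X - exits X p)"
    using fin by (meson card_image_le card_mono finite_Diff finite_imageI order_trans)
  moreover have "card (X - exits X p) < card X"
    using fin ex by (intro psubset_card_mono) (auto simp: exits_def)
  ultimately show False by simp
qed

context
  fixes U X :: "'a set"
  assumes finite_U: "finite U" and X_subset_U: "X \<subseteq> U"
begin

lemma finite_X: "finite X"
  using finite_subset[OF X_subset_U finite_U] .

lemma leibniz_term_swap_exits:
  assumes rows: "\<And>i j k. i \<in> X \<Longrightarrow> j \<in> X \<Longrightarrow> k \<in> U - X \<Longrightarrow> f i k = f j k"
    and p: "p permutes U" and ab: "a \<in> exits X p" "b \<in> exits X p" "a \<noteq> b"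
  shows "leibniz_term U f (p \<circ> transpose a b) = - leibniz_term U f p"
proof -
  have "(\<Prod>i\<in>U. f i ((p \<circ> transpose a b) i)) = (\<Prod>j\<in>U. f j (p j))"
  proof (rule prod_permutes_cong)
    show "transpose a b permutes U" using ab X_subset_U by (intro permutes_swap_id) (auto simp: exits_def)
    fix j assume "j \<in> U"
    moreover have "p j \<in> U" using permutes_in_image[OF p] \<open>j \<in> U\<close> by simp
    ultimately show "f (transpose a b j) ((p \<circ> transpose a b) (transpose a b j)) = f j (p j)"
      using rows ab by (auto simp: exits_def transpose_def)
  qed
  moreover have "sign (p \<circ> transpose a b) = - sign p"
    using ab permutes_imp_permutation[OF finite_U p]
    by (simp add: sign_compose permutation_swap_id sign_swap_id)
  ultimately show ?thesis by (simp add: leibniz_term_def)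
qed

lemma sum_leibniz_term_multiple_exits_eq_0:
  assumes rows: "\<And>i j k. i \<in> X \<Longrightarrow> j \<in> X \<Longrightarrow> k \<in> U - X \<Longrightarrow> f i k = f j k"
  shows "(\<Sum>p | p permutes U \<and> 2 \<le> card (exits X p). leibniz_term U f p) = 0"
proof -
  define first where "first E = (SOME x. x \<in> E)" for E :: "'a set"
  have first_pair: "first E \<in> E" "first (E - {first E}) \<in> E - {first E}"
    if "2 \<le> card E" for E
  proof -
    have "E \<noteq> {}" using that by auto
    then show "first E \<in> E" unfolding first_def by (simp add: some_in_eq)
    have "\<not> E \<subseteq> {first E}" using that card_mono[of "{first E}" E] by auto
    then have "E - {first E} \<noteq> {}" by blast
    then show "first (E - {first E}) \<in> E - {first E}" by (metis first_def some_in_eq)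
  qed
  define swap where "swap p = p \<circ> transpose (first (exits X p)) (first (exits X p - {first (exits X p)}))"
    for p :: "'a \<Rightarrow> 'a"
  let ?S = "{p. p permutes U \<and> 2 \<le> card (exits X p)}"
  have swap: "swap p \<in> ?S \<and> swap (swap p) = p \<and> swap p \<noteq> p \<and>
      leibniz_term U f (swap p) + leibniz_term U f p = 0" if "p \<in> ?S" for p
  proof -
    define a where "a = first (exits X p)"
    define b where "b = first (exits X p - {a})"
    have p: "p permutes U" using that by simp
    have ab: "a \<in> exits X p" "b \<in> exits X p" "a \<noteq> b"
      using first_pair[of "exits X p"] that unfolding a_def b_def by auto
    have swap_p: "swap p = p \<circ> transpose a b" unfolding swap_def a_def b_def ..
    have same_exits: "exits X (swap p) = exits X p"
      using ab unfolding swap_p by (auto simp: exits_def transpose_def)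
    have "swap p permutes U"
      unfolding swap_p using ab X_subset_U
      by (intro permutes_compose[OF _ p] permutes_swap_id) (auto simp: exits_def)
    moreover have "swap (swap p) = p"
    proof -
      have "swap (swap p) = swap p \<circ> transpose a b"
        unfolding swap_def[of "swap p"] same_exits a_def b_def ..
      then show ?thesis by (simp add: swap_p comp_assoc)
    qed
    moreover have "swap p \<noteq> p"
    proof
      assume "swap p = p"
      then have "p b = p a" unfolding swap_p by (metis comp_apply transpose_apply_first)
      then show False using ab permutes_inj[OF p] by (metis injD)
    qed
    ultimately show ?thesis
      using same_exits that leibniz_term_swap_exits[OF rows p ab] unfolding swap_p by simp
  qed
  show ?thesis by (rule sum_involution_eq_0[where h = swap]) (use swap in auto)
qed

lemma stable_perm_bij_betw:
  assumes u: "u permutes U" and stable: "exits X u = {}"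
  shows "bij_betw u X X"
proof (rule bij_betw_imageI)
  show "inj_on u X" using permutes_inj_on[OF u] .
  show "u ` X = X"
    using finite_X stable permutes_inj_on[OF u]
    by (intro endo_inj_surj) (auto simp: exits_def)
qed

lemma stable_perm_in_iff:
  assumes u: "u permutes U" and stable: "exits X u = {}"
  shows "u x \<in> X \<longleftrightarrow> x \<in> X"
proof -
  have "u x \<in> u ` X \<longleftrightarrow> x \<in> X" by (rule inj_image_mem_iff[OF permutes_inj[OF u]])
  then show ?thesis using bij_betw_imp_surj_on[OF stable_perm_bij_betw[OF u stable]] by simp
qed

lemma inv_within_stable_perm:
  assumes u: "u permutes U" and stable: "exits X u = {}"
  shows inv_within_permutes: "inv_within X u permutes U"
    and exits_inv_within: "exits X (inv_within X u) = {}"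
    and inv_within_apply: "x \<in> X \<Longrightarrow> inv_within X u (u x) = x"
    and inv_within_inv_within: "inv_within X (inv_within X u) = u"
    and sign_inv_within: "sign (inv_within X u) = sign u"
proof -
  let ?inv = Hilbert_Choice.inv
  have in_X_iff: "u x \<in> X \<longleftrightarrow> x \<in> X" "?inv u x \<in> X \<longleftrightarrow> x \<in> X" for x
    using stable_perm_in_iff[OF u stable] permutes_inverses(1)[OF u] by metis+
  \<comment> \<open>With \<open>\<sigma>\<close> the restriction of u to X we have \<open>u = \<sigma> \<circ> \<tau>\<close> for a permutation \<open>\<tau>\<close> of the
    complement, so \<open>inv_within X u = inv \<sigma> \<circ> \<tau> = inv \<sigma> \<circ> inv \<sigma> \<circ> u\<close>; this yields the sign.\<close>
  define \<sigma> where "\<sigma> = restrict_id u X"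
  have \<sigma>: "\<sigma> permutes X"
    unfolding \<sigma>_def by (rule permutes_restrict_id[OF stable_perm_bij_betw[OF u stable]])
  have \<sigma>_inv: "?inv \<sigma> \<circ> ?inv \<sigma> \<circ> u = inv_within X u"
  proof
    fix x
    show "(?inv \<sigma> \<circ> ?inv \<sigma> \<circ> u) x = inv_within X u x"
    proof (cases "x \<in> X")
      case True
      have "?inv \<sigma> (u x) = x" "?inv \<sigma> x = ?inv u x"
        using True in_X_iff permutes_inverses(1)[OF u] permutes_inv_eq[OF \<sigma>]
        by (simp_all add: \<sigma>_def)
      then show ?thesis using True by (simp add: inv_within_def)
    next
      case False
      then show ?thesis
        using in_X_iff permutes_not_in[OF permutes_inv[OF \<sigma>]] by (simp add: inv_within_def)
    qed
  qed
  show w: "inv_within X u permutes U"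
    unfolding \<sigma>_inv[symmetric] using permutes_inv[OF permutes_subset[OF \<sigma> X_subset_U]] u
    by (intro permutes_compose) auto
  show "exits X (inv_within X u) = {}"
    using in_X_iff by (auto simp: exits_def inv_within_def)
  show apply_u: "inv_within X u (u x) = x" if "x \<in> X" for x
    using that in_X_iff permutes_inverses(2)[OF u] by (simp add: inv_within_def)
  show "inv_within X (inv_within X u) = u"
  proof
    fix x
    show "inv_within X (inv_within X u) x = u x"
      using apply_u[of x] permutes_inv_eq[OF w] by (cases "x \<in> X") (auto simp: inv_within_def)
  qed
  have "permutation (?inv \<sigma>)"
    using permutes_imp_permutation[OF finite_X permutes_inv[OF \<sigma>]] .
  then show "sign (inv_within X u) = sign u"
    unfolding \<sigma>_inv[symmetric]
    by (simp add: sign_compose permutation_compose permutes_imp_permutation[OF finite_U u])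
qed

lemma leibniz_term_transpose_on_inv_within:
  assumes u: "u permutes U" and stable: "exits X u = {}"
  shows "leibniz_term U (transpose_on X f) (inv_within X u) = leibniz_term U f u"
proof -
  have "(\<Prod>i\<in>U. transpose_on X f i (inv_within X u i)) = (\<Prod>j\<in>U. f j (u j))"
  proof (rule prod_permutes_cong)
    show "restrict_id u X permutes U"
      using permutes_restrict_id[OF stable_perm_bij_betw[OF u stable]] X_subset_U
      by (rule permutes_subset)
    fix j assume "j \<in> U"
    show "transpose_on X f (restrict_id u X j) (inv_within X u (restrict_id u X j)) = f j (u j)"
      using inv_within_apply[OF u stable, of j] stable_perm_in_iff[OF u stable, of j]
      by (cases "j \<in> X") (auto simp: transpose_on_def inv_within_def)
  qed
  then show ?thesis by (simp add: leibniz_term_def sign_inv_within[OF u stable])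
qed

lemma exits_entries_stable_perm_transpose:
  assumes u: "u permutes U" and stable: "exits X u = {}" and a: "a \<in> X" and k: "k \<in> U - X"
  shows "exits X (u \<circ> transpose a k) = {a}" and "entries X (u \<circ> transpose a k) = {k}"
  using stable_perm_in_iff[OF u stable] a k by (auto simp: exits_def entries_def transpose_def)

lemma one_exit_perms_bij_betw:
  "bij_betw (\<lambda>(u, a, k). u \<circ> transpose a k)
     {(u, a, k). u permutes U \<and> exits X u = {} \<and> a \<in> X \<and> k \<in> U - X}
     {p. p permutes U \<and> card (exits X p) = 1}"
proof (rule bij_betw_imageI)
  show "inj_on (\<lambda>(u, a, k). u \<circ> transpose a k)
      {(u, a, k). u permutes U \<and> exits X u = {} \<and> a \<in> X \<and> k \<in> U - X}"
  proof (rule inj_onI, clarify)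
    fix u a k u' a' k'
    assume u: "u permutes U" "exits X u = {}" "a \<in> X" "k \<in> U" "k \<notin> X"
      and u': "u' permutes U" "exits X u' = {}" "a' \<in> X" "k' \<in> U" "k' \<notin> X"
      and eq: "u \<circ> transpose a k = u' \<circ> transpose a' k'"
    have "a = a'" "k = k'"
      using exits_entries_stable_perm_transpose[of u a k] exits_entries_stable_perm_transpose[of u' a' k']
        u u' eq by auto
    with eq have "u \<circ> transpose a k \<circ> transpose a k = u' \<circ> transpose a k \<circ> transpose a k" by simp
    then show "u = u' \<and> (a, k) = (a', k')" using \<open>a = a'\<close> \<open>k = k'\<close> by (simp add: comp_assoc)
  qed
  show "(\<lambda>(u, a, k). u \<circ> transpose a k) `
      {(u, a, k). u permutes U \<and> exits X u = {} \<and> a \<in> X \<and> k \<in> U - X} =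
      {p. p permutes U \<and> card (exits X p) = 1}"
  proof (intro equalityI subsetI)
    fix p assume "p \<in> (\<lambda>(u, a, k). u \<circ> transpose a k) `
      {(u, a, k). u permutes U \<and> exits X u = {} \<and> a \<in> X \<and> k \<in> U - X}"
    then obtain u a k where u: "u permutes U" "exits X u = {}" and ak: "a \<in> X" "k \<in> U - X"
      and p: "p = u \<circ> transpose a k" by auto
    have "p permutes U"
      unfolding p using u(1) ak X_subset_U by (intro permutes_compose permutes_swap_id) auto
    then show "p \<in> {p. p permutes U \<and> card (exits X p) = 1}"
      using exits_entries_stable_perm_transpose[OF u ak] p by simp
  next
    fix p assume "p \<in> {p. p permutes U \<and> card (exits X p) = 1}"
    then have p: "p permutes U" and "card (exits X p) = 1" by auto
    then obtain a where a: "exits X p = {a}" by (meson card_1_singletonE)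
    have "entries X p \<noteq> {}"
      using exits_nonempty_imp_entries_nonempty[OF permutes_surj[OF p] finite_X] a by simp
    then obtain k where k: "k \<notin> X" "p k \<in> X" by (auto simp: entries_def)
    have "k \<in> U" using k permutes_not_in[OF p] by metis
    define u where "u = p \<circ> transpose a k"
    have "u permutes U"
      unfolding u_def using a \<open>k \<in> U\<close> X_subset_U
      by (intro permutes_compose[OF _ p] permutes_swap_id) (auto simp: exits_def)
    moreover have "exits X u = {}"
      using a k unfolding u_def by (auto simp: exits_def transpose_def)
    moreover have "p = u \<circ> transpose a k" by (simp add: u_def comp_assoc)
    ultimately show "p \<in> (\<lambda>(u, a, k). u \<circ> transpose a k) `
      {(u, a, k). u permutes U \<and> exits X u = {} \<and> a \<in> X \<and> k \<in> U - X}"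
      using a k \<open>k \<in> U\<close> by (intro image_eqI[where x = "(u, a, k)"]) (auto simp: exits_def)
  qed
qed

lemma transpose_on_inv_within_transpose_restrict_id:
  assumes clan: "clan_on U f X" and u: "u permutes U" and stable: "exits X u = {}"
    and a: "a \<in> X" and k: "k \<in> U - X"
  shows "transpose_on X f (restrict_id u X j) ((inv_within X u \<circ> transpose (u a) k) (restrict_id u X j)) =
    f j ((u \<circ> transpose a k) j)"
proof -
  note in_X_iff = stable_perm_in_iff[OF u stable]
  have ua: "u a \<in> X" using a in_X_iff by simp
  have uk: "u k \<in> U - X" using k in_X_iff permutes_in_image[OF u] by auto
  consider "j = a" | "j = k" | "j \<in> X" "j \<noteq> a" | "j \<notin> X" "j \<noteq> k" using a k by blast
  then show ?thesis
  proof cases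
    case 1
    note clan_onD(1)[OF clan ua a uk]
    then show ?thesis using 1 a uk k by (simp add: transpose_on_def inv_within_def)
  next
    case 2
    note clan_onD(2)[OF clan ua a k]
    then show ?thesis using 2 k inv_within_apply[OF u stable a] by (simp add: transpose_on_def)
  next
    case 3
    have "u j \<noteq> u a" using 3 permutes_inj[OF u] by (metis injD)
    moreover have "u j \<noteq> k" "j \<noteq> k" using 3 k in_X_iff by auto
    ultimately show ?thesis
      using 3 in_X_iff inv_within_apply[OF u stable 3(1)] by (simp add: transpose_on_def)
  next
    case 4
    have "j \<noteq> u a" "j \<noteq> a" using 4 a ua by auto
    then show ?thesis using 4 in_X_iff by (simp add: transpose_on_def inv_within_def)
  qed
qed

lemma leibniz_term_transpose_on_inv_within_transpose:
  assumes clan: "clan_on U f X" and u: "u permutes U" and stable: "exits X u = {}"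
    and a: "a \<in> X" and k: "k \<in> U - X"
  shows "leibniz_term U (transpose_on X f) (inv_within X u \<circ> transpose (u a) k) =
    leibniz_term U f (u \<circ> transpose a k)"
proof -
  have "(\<Prod>i\<in>U. transpose_on X f i ((inv_within X u \<circ> transpose (u a) k) i)) =
      (\<Prod>j\<in>U. f j ((u \<circ> transpose a k) j))"
  proof (rule prod_permutes_cong)
    show "restrict_id u X permutes U"
      using permutes_restrict_id[OF stable_perm_bij_betw[OF u stable]] X_subset_U
      by (rule permutes_subset)
  qed (rule transpose_on_inv_within_transpose_restrict_id[OF clan u stable a k])
  moreover have "sign (inv_within X u \<circ> transpose (u a) k) = sign (u \<circ> transpose a k)"
  proof -
    have "u a \<noteq> k" "a \<noteq> k" using a k stable_perm_in_iff[OF u stable] by auto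
    then show ?thesis
      using permutes_imp_permutation[OF finite_U u]
        permutes_imp_permutation[OF finite_U inv_within_permutes[OF u stable]]
      by (simp add: sign_compose permutation_swap_id sign_swap_id sign_inv_within[OF u stable])
  qed
  ultimately show ?thesis by (simp add: leibniz_term_def)
qed

lemma sum_stable_perms_transpose_on:
  "(\<Sum>p | p permutes U \<and> exits X p = {}. leibniz_term U (transpose_on X f) p) =
    (\<Sum>p | p permutes U \<and> exits X p = {}. leibniz_term U f p)"
  by (rule sym, rule sum.reindex_bij_witness[where i = "inv_within X" and j = "inv_within X"])
    (auto simp: inv_within_permutes exits_inv_within inv_within_inv_within
      leibniz_term_transpose_on_inv_within)

lemma sum_one_exit_perms_transpose_on:
  assumes clan: "clan_on U f X"
  shows "(\<Sum>p | p permutes U \<and> card (exits X p) = 1. leibniz_term U (transpose_on X f) p) =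
    (\<Sum>p | p permutes U \<and> card (exits X p) = 1. leibniz_term U f p)"
proof -
  let ?T = "{(u, a, k). u permutes U \<and> exits X u = {} \<and> a \<in> X \<and> k \<in> U - X}"
  let ?F = "\<lambda>(u, a, k). u \<circ> transpose a k"
  let ?\<rho> = "\<lambda>(u, a, k). (inv_within X u, u a, k)"
  have "(\<Sum>p | p permutes U \<and> card (exits X p) = 1. leibniz_term U (transpose_on X f) p) =
      (\<Sum>t\<in>?T. leibniz_term U (transpose_on X f) (?F t))"
    by (rule sum.reindex_bij_betw[OF one_exit_perms_bij_betw, symmetric])
  also have "\<dots> = (\<Sum>t\<in>?T. leibniz_term U f (?F t))"
    by (rule sym, rule sum.reindex_bij_witness[where i = ?\<rho> and j = ?\<rho>])
      (auto simp: stable_perm_in_iff inv_within_permutes exits_inv_within inv_within_inv_within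
        inv_within_apply leibniz_term_transpose_on_inv_within_transpose[OF clan])
  also have "\<dots> = (\<Sum>p | p permutes U \<and> card (exits X p) = 1. leibniz_term U f p)"
    by (rule sum.reindex_bij_betw[OF one_exit_perms_bij_betw])
  finally show ?thesis .
qed

lemma leibniz_det_split_by_exits:
  "leibniz_det U f =
    (\<Sum>p | p permutes U \<and> exits X p = {}. leibniz_term U f p) +
    (\<Sum>p | p permutes U \<and> card (exits X p) = 1. leibniz_term U f p) +
    (\<Sum>p | p permutes U \<and> 2 \<le> card (exits X p). leibniz_term U f p)"
proof -
  let ?S0 = "{p. p permutes U \<and> exits X p = {}}"
  let ?S1 = "{p. p permutes U \<and> card (exits X p) = 1}"
  let ?S2 = "{p. p permutes U \<and> 2 \<le> card (exits X p)}"
  have finite_perms: "finite {p. p permutes U \<and> P p}" for P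
    by (rule finite_subset[OF _ finite_permutations[OF finite_U]]) auto
  have "exits X p = {} \<or> card (exits X p) = 1 \<or> 2 \<le> card (exits X p)" for p
  proof -
    have "finite (exits X p)" using finite_X by (auto simp: exits_def)
    then show ?thesis by (cases "card (exits X p)") auto
  qed
  then have partition: "{p. p permutes U} = (?S0 \<union> ?S1) \<union> ?S2" by blast
  have "leibniz_det U f = (\<Sum>p\<in>?S0 \<union> ?S1. leibniz_term U f p) + (\<Sum>p\<in>?S2. leibniz_term U f p)"
    unfolding leibniz_det_def partition by (rule sum.union_disjoint) (auto simp: finite_perms)
  also have "(\<Sum>p\<in>?S0 \<union> ?S1. leibniz_term U f p) =
      (\<Sum>p\<in>?S0. leibniz_term U f p) + (\<Sum>p\<in>?S1. leibniz_term U f p)"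
    by (rule sum.union_disjoint) (auto simp: finite_perms)
  finally show ?thesis .
qed

end

theorem leibniz_det_transpose_on_clan:
  assumes fin: "finite U" and clan: "clan_on U f X"
  shows "leibniz_det U (transpose_on X f) = leibniz_det U f"
proof -
  have XU: "X \<subseteq> U" using clan by (simp add: clan_on_def)
  have rows_transpose_on: "transpose_on X f i k = transpose_on X f j k"
    if "i \<in> X" "j \<in> X" "k \<in> U - X" for i j k
    using clan_onD(1)[OF clan that] that by (simp add: transpose_on_def)
  have rows: "f i k = f j k" if "i \<in> X" "j \<in> X" "k \<in> U - X" for i j k
    using clan_onD(1)[OF clan that] .
  have "(\<Sum>p | p permutes U \<and> 2 \<le> card (exits X p). leibniz_term U (transpose_on X f) p) = 0"
    using rows_transpose_on by (rule sum_leibniz_term_multiple_exits_eq_0[OF fin XU])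
  moreover have "(\<Sum>p | p permutes U \<and> 2 \<le> card (exits X p). leibniz_term U f p) = 0"
    using rows by (rule sum_leibniz_term_multiple_exits_eq_0[OF fin XU])
  ultimately show ?thesis
    unfolding leibniz_det_split_by_exits[OF fin XU] sum_stable_perms_transpose_on[OF fin XU]
      sum_one_exit_perms_transpose_on[OF fin XU clan] by simp
qed

lemma clan_on_pullback:
  assumes clan: "clan_on U f X" and h: "h ` V \<subseteq> U"
  shows "clan_on V (\<lambda>i j. f (h i) (h j)) {i \<in> V. h i \<in> X}"
proof -
  have "f (h i) (h k) = f (h j) (h k) \<and> f (h k) (h i) = f (h k) (h j)"
    if "h i \<in> X" "h j \<in> X" "k \<in> V" "h k \<notin> X" for i j k
  proof -
    have "h k \<in> U - X" using h that(3,4) by blast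
    then show ?thesis using clan_onD[OF clan that(1,2)] by blast
  qed
  then show ?thesis unfolding clan_on_def by blast
qed

lemma det_mat_eq_leibniz_det: "det (mat m m (\<lambda>(i, j). h i j)) = leibniz_det {0..<m} h"
proof -
  have "det (mat m m (\<lambda>(i, j). h i j)) =
      (\<Sum>p | p permutes {0..<m}. signof p * (\<Prod>i = 0..<m. mat m m (\<lambda>(i, j). h i j) $$ (i, p i)))"
    by (rule det_def') simp
  also have "\<dots> = leibniz_det {0..<m} h"
    unfolding leibniz_det_def leibniz_term_def
  proof (rule sum.cong)
    fix p assume "p \<in> {p. p permutes {0..<m}}"
    then have "\<forall>i\<in>{0..<m}. p i < m" using permutes_in_image by fastforce
    then show "signof p * (\<Prod>i = 0..<m. mat m m (\<lambda>(i, j). h i j) $$ (i, p i)) =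
        of_int (sign p) * (\<Prod>i\<in>{0..<m}. h i (p i))"
      by simp
  qed simp
  finally show ?thesis .
qed

lemma principal_submatrix_eq_mat:
  assumes "A \<in> carrier_mat n n" and "Y \<subseteq> {0..<n}"
  shows "principal_submatrix A Y = mat (card Y) (card Y) (\<lambda>(i, j). A $$ (pick Y i, pick Y j))"
proof -
  have "{i. i < n \<and> i \<in> Y} = Y" using assms(2) by auto
  then show ?thesis using assms(1) by (simp add: principal_submatrix_def submatrix_def)
qed

lemma principal_submatrix_Inv:
  assumes A: "A \<in> carrier_mat n n" and Y: "Y \<subseteq> {0..<n}"
  shows "principal_submatrix (Inv A X) Y = mat (card Y) (card Y) (\<lambda>(i, j).
    transpose_on {i \<in> {0..<card Y}. pick Y i \<in> X} (\<lambda>i j. A $$ (pick Y i, pick Y j)) i j)"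
proof -
  have "Inv A X \<in> carrier_mat n n" using A by (simp add: Inv_def)
  then have "principal_submatrix (Inv A X) Y =
      mat (card Y) (card Y) (\<lambda>(i, j). Inv A X $$ (pick Y i, pick Y j))"
    using Y by (rule principal_submatrix_eq_mat)
  also have "\<dots> = mat (card Y) (card Y) (\<lambda>(i, j).
      transpose_on {i \<in> {0..<card Y}. pick Y i \<in> X} (\<lambda>i j. A $$ (pick Y i, pick Y j)) i j)"
  proof (rule cong_mat)
    fix i j assume ij: "i < card Y" "j < card Y"
    then have "pick Y i \<in> Y" "pick Y j \<in> Y" by (simp_all add: pick_in_set)
    then have "pick Y i < n" "pick Y j < n" using Y by auto
    with ij show "(\<lambda>(i, j). Inv A X $$ (pick Y i, pick Y j)) (i, j) = (\<lambda>(i, j).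
        transpose_on {i \<in> {0..<card Y}. pick Y i \<in> X} (\<lambda>i j. A $$ (pick Y i, pick Y j)) i j) (i, j)"
      using A by (simp add: Inv_def transpose_on_def)
  qed simp_all
  finally show ?thesis .
qed

theorem lemma5p1:
  fixes n :: nat and A :: "real mat" and X :: "nat set"
  assumes "gen_tournament n A"
    and "clan n A X"
  shows "\<forall>Y. Y \<noteq> {} \<and> Y \<subseteq> {0..<n} \<longrightarrow>
           det (principal_submatrix (Inv A X) Y) = det (principal_submatrix A Y)"
proof (intro allI impI)
  fix Y assume "Y \<noteq> {} \<and> Y \<subseteq> {0..<n}"
  then have Y: "Y \<subseteq> {0..<n}" by simp
  have A: "A \<in> carrier_mat n n" using assms(1) by (simp add: gen_tournament_def)
  let ?G = "\<lambda>i j. A $$ (pick Y i, pick Y j)"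
  let ?X = "{i \<in> {0..<card Y}. pick Y i \<in> X}"
  have "clan_on {0..<n} (\<lambda>i j. A $$ (i, j)) X" using assms(2) unfolding clan_def clan_on_def .
  moreover have "pick Y ` {0..<card Y} \<subseteq> {0..<n}" using Y by (auto simp: pick_in_set)
  ultimately have clan_Y: "clan_on {0..<card Y} ?G ?X" by (rule clan_on_pullback)
  have "det (principal_submatrix (Inv A X) Y) = leibniz_det {0..<card Y} (transpose_on ?X ?G)"
    unfolding principal_submatrix_Inv[OF A Y] by (rule det_mat_eq_leibniz_det)
  also have "\<dots> = leibniz_det {0..<card Y} ?G"
    using finite_atLeastLessThan clan_Y by (rule leibniz_det_transpose_on_clan)
  also have "\<dots> = det (principal_submatrix A Y)"
    unfolding principal_submatrix_eq_mat[OF A Y] by (rule det_mat_eq_leibniz_det[symmetric])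
  finally show "det (principal_submatrix (Inv A X) Y) = det (principal_submatrix A Y)" .
qed

end
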